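(* Consider a stationary memoryless source over a $D$-ary alphabet ($D\ge2$) whose symbol probability mass function has minimal mass $p_{\min}>0$, let $\rho:=1/p_{\min}$, let $P_\ell$ be the probability mass function induced on the $n$ leaves of a Tunstall tree with $n$ leaves, and for $\omega\in(0,1)$ let $d_{\omega,n}(P_\ell):=D_{\phi_\omega}(P_\ell\|U_n)$. Then: (a) $d_{\omega,n}(P_\ell)$ is the minimum of $D_{\phi_\omega}(P\|U_n)$ over all probability measures $P$ induced on the leaves by an arbitrary $D$-ary parsing tree with $n$ leaves for the same source; (b) $d_{\omega,n}(P_\ell)\le\max_{\beta\in\Gamma_n(\rho)}D_{\phi_\omega}(Q_\beta\|U_n)$; (c) for every $n\in\mathbb N$, $d_{\omega,n}(P_\ell)\le\max_{x\in[0,1]}\Big\{x\,\phi_\omega\big(\frac{\rho}{1+(\rho-1)x}\big)+(1-x)\,\phi_\omega\big(\frac1{1+(\rho-1)x}\big)\Big\}$, which equals the $n\to\infty$ limit of the bound in (b); (d) if $f:(0,\infty)\to\mathbb R$ is convex, twice differentiable, continuous at zero, with $f(1)=0$, then $D_f(P_\ell\|U_n)=\int_0^1\frac{d_{\omega,n}(P_\ell)}{\omega^3}f''\big(\frac{1-\omega}{\omega}\big)\,d\omega$.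
   Context: A $D$-ary parsing tree is a complete $D$-ary tree; a leaf at the end of the path $s_1\cdots s_k$ of source symbols gets probability $\prod_jP(s_j)$, giving a probability mass function on the leaves. A Tunstall tree with $n$ leaves is obtained from the single root by repeatedly expanding a leaf of currently maximal probability into its $D$ children. $U_n$ is uniform on $n$ points. $\phi_\omega(t):=\min\{\omega,1-\omega\}-\min\{\omega,1-\omega t\}$, $t\ge0$, and $D_f(P\|Q)=\sum_xQ(x)f(P(x)/Q(x))$. For $\rho>1$: $\Gamma_n(\rho):=[\frac1{1+(n-1)\rho},\frac1n]$, and for $\beta\in\Gamma_n(\rho)$, $i_\beta:=\lfloor\frac{1-n\beta}{(\rho-1)\beta}\rfloor$, $Q_\beta(j)=\rho\beta$ for $j\le i_\beta$, $Q_\beta(i_\beta+1)=1-(n+i_\beta(\rho-1)-1)\beta$, $Q_\beta(j)=\beta$ for $i_\beta+2\le j\le n$. *)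

theory Defs
  imports "HOL-Analysis.Analysis"
begin

text \<open>A D-ary parsing tree is represented by its set of leaves (words). Complete D-ary trees are
exactly those obtained from the root by repeatedly expanding a leaf into its D children.\<close>

inductive_set parsing_trees :: "nat \<Rightarrow> nat list set set" for D :: nat where
  root: "{[]} \<in> parsing_trees D"
| expand: "L \<in> parsing_trees D \<Longrightarrow> w \<in> L \<Longrightarrow>
     (L - {w}) \<union> (\<lambda>s. w @ [s]) ` {..<D} \<in> parsing_trees D"

definition word_prob :: "(nat \<Rightarrow> real) \<Rightarrow> nat list \<Rightarrow> real" where
  "word_prob p w = prod_list (map p w)"

inductive_set tunstall_trees :: "nat \<Rightarrow> (nat \<Rightarrow> real) \<Rightarrow> nat list set set"
  for D :: nat and p :: "nat \<Rightarrow> real" where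
  root: "{[]} \<in> tunstall_trees D p"
| expand: "L \<in> tunstall_trees D p \<Longrightarrow> w \<in> L \<Longrightarrow>
     (\<forall>v\<in>L. word_prob p v \<le> word_prob p w) \<Longrightarrow>
     (L - {w}) \<union> (\<lambda>s. w @ [s]) ` {..<D} \<in> tunstall_trees D p"

definition phi :: "real \<Rightarrow> real \<Rightarrow> real" where
  "phi \<omega> t = min \<omega> (1 - \<omega>) - min \<omega> (1 - \<omega> * t)"

text \<open>f-divergence D_f(P || U_n) of a pmf P on the finite set A (n = card A) from the uniform
distribution on A: sum over x of (1/n) f(P x / (1/n)).\<close>
definition fdiv_unif :: "(real \<Rightarrow> real) \<Rightarrow> 'a set \<Rightarrow> ('a \<Rightarrow> real) \<Rightarrow> real" where
  "fdiv_unif f A P = (\<Sum>x\<in>A. (1 / real (card A)) * f (P x * real (card A)))"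

definition Gamma :: "nat \<Rightarrow> real \<Rightarrow> real set" where
  "Gamma n \<rho> = {1 / (1 + (real n - 1) * \<rho>) .. 1 / real n}"

definition i_beta :: "real \<Rightarrow> nat \<Rightarrow> real \<Rightarrow> nat" where
  "i_beta \<rho> n \<beta> = nat \<lfloor>(1 - real n * \<beta>) / ((\<rho> - 1) * \<beta>)\<rfloor>"

text \<open>Q_beta as a pmf on {1..n}.\<close>
definition Q_beta :: "real \<Rightarrow> nat \<Rightarrow> real \<Rightarrow> nat \<Rightarrow> real" where
  "Q_beta \<rho> n \<beta> j =
     (let i = i_beta \<rho> n \<beta> in
      if j \<le> i then \<rho> * \<beta>
      else if j = i + 1 then 1 - (real n + real i * (\<rho> - 1) - 1) * \<beta>
      else \<beta>)"

definition bound_b :: "real \<Rightarrow> real \<Rightarrow> nat \<Rightarrow> real" where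
  "bound_b \<omega> \<rho> n = Sup ((\<lambda>\<beta>. fdiv_unif (phi \<omega>) {1..n} (Q_beta \<rho> n \<beta>)) ` Gamma n \<rho>)"

definition bound_c :: "real \<Rightarrow> real \<Rightarrow> real" where
  "bound_c \<omega> \<rho> = Sup ((\<lambda>x. x * phi \<omega> (\<rho> / (1 + (\<rho> - 1) * x))
                         + (1 - x) * phi \<omega> (1 / (1 + (\<rho> - 1) * x))) ` {0..1})"

end

theory Submission
  imports Defs "HOL-Library.Sublist"
begin

text \<open>For \<open>\<omega> \<in> (0,1)\<close>, \<open>D\<^sub>\<phi>\<^sub>\<omega>(P\<parallel>U\<^sub>n)\<close> is an affine function of
  \<open>\<Sum>\<^sub>x (P x - c)\<^sup>+\<close> with \<open>c = (1 - \<omega>) / (\<omega> n)\<close>. Splitting a leaf of probability \<open>a\<close>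
  lowers this sum by an amount that is monotone in \<open>a\<close>, so over trees with \<open>n\<close> leaves the sum is
  smallest when the internal nodes are as probable as possible, which is what the greedy Tunstall
  construction achieves (a). The leaves of a Tunstall tree have probabilities in \<open>[\<beta>, \<rho> \<beta>]\<close>,
  \<open>\<beta>\<close> the smallest one. Since \<open>\<phi>\<^sub>\<omega>\<close> is convex, pushing two such masses apart increases
  the divergence until at most one mass lies strictly inside the interval, which is \<open>Q\<^sub>\<beta>\<close>
  (b); bounding \<open>\<phi>\<^sub>\<omega>\<close> by its chord over \<open>[\<beta> n, \<rho> \<beta> n]\<close> gives (c), and the
  chord bound is attained by \<open>Q\<^sub>\<beta>\<close> with \<open>\<beta> = 1 / (m + k (\<rho> - 1))\<close> at \<open>x = k / m\<close>,
  whence the limit. Finally \<open>\<phi>\<^sub>\<omega>(t) = \<omega> K\<^sub>t((1 - \<omega>) / \<omega>)\<close> for a piecewise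
  linear kernel \<open>K\<^sub>t\<close>, and (d) is integration by parts in \<open>u = (1 - \<omega>) / \<omega>\<close>.\<close>

section \<open>Sums and convex functions\<close>

lemma convex_on_spread:
  fixes g :: "real \<Rightarrow> real"
  assumes g: "convex_on UNIV g" and "a \<le> b" "0 \<le> e"
  shows "g a + g b \<le> g (a - e) + g (b + e)"
proof (cases "e = 0")
  case False
  define t where "t = e / (b - a + 2 * e)"
  have t: "0 \<le> t" "t \<le> 1" and den: "0 < b - a + 2 * e"
    using assms False by (auto simp: t_def field_simps)
  have "t * (b - a + 2 * e) = e"
    using den by (simp add: t_def)
  then have "a = (1 - t) *\<^sub>R (a - e) + t *\<^sub>R (b + e)" "b = t *\<^sub>R (a - e) + (1 - t) *\<^sub>R (b + e)"
    by (simp_all add: algebra_simps)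
  then have "g a \<le> (1 - t) * g (a - e) + t * g (b + e)" "g b \<le> t * g (a - e) + (1 - t) * g (b + e)"
    using convex_onD[OF g, of t "a - e" "b + e"] convex_onD[OF g, of "1 - t" "a - e" "b + e"] t
    by auto
  then show ?thesis by (simp add: algebra_simps)
qed simp

lemma convex_sum_le_chord:
  fixes h :: "real \<Rightarrow> real" and y :: "'a \<Rightarrow> real" and lo hi :: real
  assumes h: "convex_on {lo..hi} h" and "lo < hi" and "finite A"
    and y: "\<And>x. x \<in> A \<Longrightarrow> y x \<in> {lo..hi}"
  shows "(\<Sum>x\<in>A. h (y x))
           \<le> ((\<Sum>x\<in>A. y x) - card A * lo) / (hi - lo) * h hi
             + (card A * hi - (\<Sum>x\<in>A. y x)) / (hi - lo) * h lo"
proof -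
  have "h (y x) \<le> (y x - lo) / (hi - lo) * h hi + (hi - y x) / (hi - lo) * h lo" if "x \<in> A" for x
  proof -
    define t where "t = (y x - lo) / (hi - lo)"
    have t: "0 \<le> t" "t \<le> 1" and t': "1 - t = (hi - y x) / (hi - lo)"
      using y[OF that] \<open>lo < hi\<close> by (auto simp: t_def field_simps)
    have "t * (hi - lo) = y x - lo"
      using \<open>lo < hi\<close> by (simp add: t_def)
    then have "(1 - t) *\<^sub>R lo + t *\<^sub>R hi = y x"
      by (simp add: algebra_simps)
    then have "h (y x) \<le> (1 - t) * h lo + t * h hi"
      using convex_onD_Icc[OF h, of t] \<open>lo < hi\<close> t by simp
    also have "\<dots> = (y x - lo) / (hi - lo) * h hi + (hi - y x) / (hi - lo) * h lo"
      unfolding t' by (simp add: t_def)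
    finally show ?thesis .
  qed
  then have "(\<Sum>x\<in>A. h (y x))
               \<le> (\<Sum>x\<in>A. (y x - lo) / (hi - lo) * h hi + (hi - y x) / (hi - lo) * h lo)"
    by (rule sum_mono)
  also have "\<dots> = ((\<Sum>x\<in>A. y x) - card A * lo) / (hi - lo) * h hi
                   + (card A * hi - (\<Sum>x\<in>A. y x)) / (hi - lo) * h lo"
    by (simp add: sum.distrib sum_subtractf flip: sum_divide_distrib sum_distrib_right)
  finally show ?thesis .
qed

lemma sum_update_pair:
  fixes f :: "'b \<Rightarrow> real"
  assumes "finite A" "a \<in> A" "b \<in> A" "a \<noteq> b"
  shows "(\<Sum>x\<in>A. f ((P(a := u, b := v)) x)) = (\<Sum>x\<in>A. f (P x)) - f (P a) - f (P b) + f u + f v"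
proof -
  have "(\<Sum>x\<in>A. f (Q x)) = f (Q a) + f (Q b) + (\<Sum>x\<in>A - {a} - {b}. f (Q x))" for Q
    using assms by (simp add: sum.remove[of A a] sum.remove[of "A - {a}" b] add.assoc)
  from this[of "P(a := u, b := v)"] this[of P] show ?thesis
    using assms by (simp add: algebra_simps)
qed

lemma sum_mono_exchange:
  fixes h :: "real \<Rightarrow> real" and P :: "'a \<Rightarrow> real"
  assumes "finite I" "finite J" "card I = card J" and h: "mono h"
    and J: "\<forall>v\<in>J. q \<le> P v" and I: "\<forall>v\<in>I - J. P v \<le> q"
  shows "(\<Sum>v\<in>I. h (P v)) \<le> (\<Sum>v\<in>J. h (P v))"
proof -
  have card_diff: "card (I - J) = card (J - I)"
    using assms(1-3) by (metis card_Diff_subset_Int Diff_Int2 finite_Int inf_commute)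
  have "(\<Sum>v\<in>I - J. h (P v)) \<le> (\<Sum>v\<in>I - J. h q)"
    using I h by (intro sum_mono) (auto dest: monoD)
  also have "\<dots> = (\<Sum>v\<in>J - I. h q)"
    using card_diff by simp
  also have "\<dots> \<le> (\<Sum>v\<in>J - I. h (P v))"
    using J h by (intro sum_mono) (auto dest: monoD)
  finally show ?thesis
    using assms(1,2) by (metis sum.Int_Diff inf_commute add_left_mono)
qed

section \<open>The functions \<open>\<phi>\<^sub>\<omega>\<close>\<close>

lemma phi_eq_max: "phi \<omega> t = min \<omega> (1 - \<omega>) - \<omega> + max 0 (\<omega> * t + \<omega> - 1)"
  unfolding phi_def by (simp add: min_def max_def)

lemma convex_on_phi: "convex_on UNIV (phi \<omega>)"
proof (rule convex_onI)
  fix s x y :: real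
  assume s: "0 < s" "s < 1"
  let ?h = "\<lambda>t. max 0 (\<omega> * t + \<omega> - 1)"
  have "\<omega> * ((1 - s) * x + s * y) + \<omega> - 1 = (1 - s) * (\<omega> * x + \<omega> - 1) + s * (\<omega> * y + \<omega> - 1)"
    by (simp add: algebra_simps)
  also have "\<dots> \<le> (1 - s) * ?h x + s * ?h y"
    using s by (intro add_mono mult_left_mono) auto
  finally have "?h ((1 - s) * x + s * y) \<le> (1 - s) * ?h x + s * ?h y"
    using s by simp
  then show "phi \<omega> ((1 - s) *\<^sub>R x + s *\<^sub>R y) \<le> (1 - s) * phi \<omega> x + s * phi \<omega> y"
    unfolding phi_eq_max by (simp add: algebra_simps)
qed simp

lemma convex_on_phi_scaled:
  assumes "0 \<le> n"
  shows "convex_on UNIV (\<lambda>v. 1 / n * phi \<omega> (v * n))"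
proof (rule convex_onI)
  fix s x y :: real
  assume "0 < s" "s < 1"
  then have "phi \<omega> ((1 - s) * (x * n) + s * (y * n)) \<le> (1 - s) * phi \<omega> (x * n) + s * phi \<omega> (y * n)"
    using convex_onD[OF convex_on_phi, of s "x * n" "y * n"] by simp
  then have "1 / n * phi \<omega> (((1 - s) * x + s * y) * n)
               \<le> 1 / n * ((1 - s) * phi \<omega> (x * n) + s * phi \<omega> (y * n))"
    using assms by (intro mult_left_mono) (simp_all add: algebra_simps)
  then show "1 / n * phi \<omega> (((1 - s) *\<^sub>R x + s *\<^sub>R y) * n)
               \<le> (1 - s) * (1 / n * phi \<omega> (x * n)) + s * (1 / n * phi \<omega> (y * n))"
    by (simp add: algebra_simps diff_divide_distrib)
qed simp

lemma phi_eq_hinge: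
  fixes \<omega> n v :: real
  assumes "0 < \<omega>" "0 < n"
  shows "1 / n * phi \<omega> (v * n)
           = (min \<omega> (1 - \<omega>) - \<omega>) / n + \<omega> * max 0 (v - (1 - \<omega>) / (\<omega> * n))"
proof -
  have "\<omega> * (v * n) + \<omega> - 1 = (\<omega> * n) * (v - (1 - \<omega>) / (\<omega> * n))"
    using assms by (simp add: field_simps)
  then have "max 0 (\<omega> * (v * n) + \<omega> - 1) = \<omega> * n * max 0 (v - (1 - \<omega>) / (\<omega> * n))"
    using assms by (simp add: max_mult_distrib_left)
  then show ?thesis
    unfolding phi_eq_max using assms by (simp add: field_simps)
qed

lemma fdiv_phi_eq_hinge_sum:
  fixes P :: "'a \<Rightarrow> real"
  assumes "0 < \<omega>" "finite A" "A \<noteq> {}"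
  shows "fdiv_unif (phi \<omega>) A P
           = min \<omega> (1 - \<omega>) - \<omega> + \<omega> * (\<Sum>x\<in>A. max 0 (P x - (1 - \<omega>) / (\<omega> * card A)))"
proof -
  have "0 < real (card A)"
    using assms by (simp add: card_gt_0_iff)
  then show ?thesis
    unfolding fdiv_unif_def phi_eq_hinge[OF assms(1) \<open>0 < real (card A)\<close>]
    by (simp add: sum.distrib sum_distrib_left)
qed

lemma phi_eq_0:
  assumes "\<omega> \<le> 1 - \<omega>" "\<omega> * (1 + t) \<le> 1"
  shows "phi \<omega> t = 0"
  using assms by (simp add: phi_def min_def algebra_simps)

lemma phi_eq_affine:
  assumes "1 - \<omega> \<le> \<omega>" "1 \<le> \<omega> * (1 + t)"
  shows "phi \<omega> t = \<omega> * t - \<omega>"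
  using assms by (simp add: phi_def min_def algebra_simps)

section \<open>Parsing trees\<close>

definition internal_nodes :: "'a list set \<Rightarrow> 'a list set" where
  "internal_nodes L = {u. \<exists>x\<in>L. strict_prefix u x}"

lemma finite_internal_nodes:
  assumes "finite L"
  shows "finite (internal_nodes L)"
proof (rule finite_subset)
  show "internal_nodes L \<subseteq> (\<Union>x\<in>L. set (prefixes x))"
    by (auto simp: internal_nodes_def strict_prefix_def)
qed (use assms in simp)

lemma parsing_trees_finite: "L \<in> parsing_trees D \<Longrightarrow> finite L"
  by (induction rule: parsing_trees.induct) auto

lemma parsing_trees_words: "L \<in> parsing_trees D \<Longrightarrow> x \<in> L \<Longrightarrow> set x \<subseteq> {..<D}"
  by (induction arbitrary: x rule: parsing_trees.induct) fastforce+

lemma parsing_trees_internal_words: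
  "L \<in> parsing_trees D \<Longrightarrow> v \<in> internal_nodes L \<Longrightarrow> set v \<subseteq> {..<D}"
  by (force simp: internal_nodes_def strict_prefix_def prefix_def dest: parsing_trees_words)

lemma parsing_trees_prefix_free:
  "L \<in> parsing_trees D \<Longrightarrow> x \<in> L \<Longrightarrow> y \<in> L \<Longrightarrow> prefix x y \<Longrightarrow> x = y"
proof (induction arbitrary: x y rule: parsing_trees.induct)
  case root
  then show ?case by simp
next
  case (expand L w)
  have child: "\<not> prefix (w @ [s]) v" "prefix v (w @ [s]) \<Longrightarrow> v = w @ [s]" if "v \<in> L - {w}" for v s
    using that expand.IH[of w v] expand.IH[of v w] expand.hyps(2)
    by (auto simp: prefix_snoc dest: prefix_order.trans[rotated])
  show ?case
    using expand.prems expand.IH child by (auto simp: prefix_snoc)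
qed

lemma internal_nodes_expand:
  assumes "0 < D" "w \<in> L"
  shows "internal_nodes ((L - {w}) \<union> (\<lambda>s. w @ [s]) ` {..<D}) = insert w (internal_nodes L)"
    (is "internal_nodes ?L' = _")
proof -
  have child: "strict_prefix u (w @ [s]) \<longleftrightarrow> prefix u w" for u s
    by (auto simp: strict_prefix_def prefix_snoc)
  have "w @ [0] \<in> ?L'"
    using assms by auto
  then have "u \<in> internal_nodes ?L'" if "prefix u w" for u
    using that child unfolding internal_nodes_def by blast
  moreover have "u \<in> internal_nodes ?L'" if "x \<in> L" "strict_prefix u x" for u x
    using that calculation[of u] by (cases "x = w") (auto simp: internal_nodes_def)
  ultimately show ?thesis
    using assms child by (auto simp: internal_nodes_def strict_prefix_def)
qed

lemma parsing_trees_complete: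
  assumes "0 < D" "L \<in> parsing_trees D" "set v \<subseteq> {..<D}"
  shows "v \<in> internal_nodes L \<or> (\<exists>x\<in>L. prefix x v)"
  using assms(2)
proof (induction rule: parsing_trees.induct)
  case root
  then show ?case by simp
next
  case (expand L w)
  let ?L' = "(L - {w}) \<union> (\<lambda>s. w @ [s]) ` {..<D}"
  have internal: "internal_nodes ?L' = insert w (internal_nodes L)"
    using internal_nodes_expand[OF assms(1) expand.hyps(2)] .
  show ?case
  proof (cases "\<exists>x\<in>L - {w}. prefix x v")
    case False
    then consider "v \<in> internal_nodes L" | "prefix w v"
      using expand.IH by blast
    then show ?thesis
    proof cases
      case 2
      then obtain z where v: "v = w @ z"
        by (auto simp: prefix_def)
      show ?thesis
      proof (cases z)
        case (Cons s z')
        then have "w @ [s] \<in> ?L'" "prefix (w @ [s]) v"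
          using assms(3) v by auto
        then show ?thesis
          by blast
      qed (use internal v in simp)
    qed (use internal in simp)
  qed auto
qed

lemma sum_expand_leaf:
  fixes f :: "nat list \<Rightarrow> 'b::ab_group_add"
  assumes L: "L \<in> parsing_trees D" and w: "w \<in> L"
  shows "sum f ((L - {w}) \<union> (\<lambda>s. w @ [s]) ` {..<D}) = sum f L - f w + (\<Sum>s<D. f (w @ [s]))"
proof -
  have "w @ [s] \<notin> L" for s
    using parsing_trees_prefix_free[OF L w, of "w @ [s]"] by auto
  then have "(L - {w}) \<inter> (\<lambda>s. w @ [s]) ` {..<D} = {}"
    by auto
  moreover have "inj_on (\<lambda>s. w @ [s]) {..<D}"
    by (auto simp: inj_on_def)
  ultimately show ?thesis
    using parsing_trees_finite[OF L] w by (simp add: sum.union_disjoint sum_diff1 sum.reindex)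
qed

lemma parsing_trees_card:
  assumes "0 < D" "L \<in> parsing_trees D"
  shows "card L = 1 + (D - 1) * card (internal_nodes L)"
  using assms(2)
proof (induction rule: parsing_trees.induct)
  case root
  then show ?case
    by (simp add: internal_nodes_def)
next
  case (expand L w)
  let ?L' = "(L - {w}) \<union> (\<lambda>s. w @ [s]) ` {..<D}"
  have "int (card ?L') = int (card L) - 1 + int D"
    using sum_expand_leaf[OF expand.hyps, of "\<lambda>_. 1 :: int"] by simp
  moreover have "w \<notin> internal_nodes L"
    using parsing_trees_prefix_free[OF expand.hyps] by (auto simp: internal_nodes_def strict_prefix_def)
  then have "card (internal_nodes ?L') = card (internal_nodes L) + 1"
    using internal_nodes_expand[OF assms(1) expand.hyps(2)] parsing_trees_finite[OF expand.hyps(1)]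
    by (simp add: finite_internal_nodes)
  moreover obtain d where "D = Suc d"
    using assms(1) by (cases D) auto
  ultimately have "int (card ?L') = int (1 + (D - 1) * card (internal_nodes ?L'))"
    using expand.IH by (simp add: algebra_simps)
  then show ?case
    by (simp only: of_nat_eq_iff)
qed

lemma word_prob_Nil [simp]: "word_prob p [] = 1"
  by (simp add: word_prob_def)

lemma word_prob_append: "word_prob p (u @ v) = word_prob p u * word_prob p v"
  by (simp add: word_prob_def)

lemma tunstall_trees_parsing_trees: "L \<in> tunstall_trees D p \<Longrightarrow> L \<in> parsing_trees D"
  by (induction rule: tunstall_trees.induct) (auto intro: parsing_trees.intros)

section \<open>Optimality of Tunstall trees\<close>

locale memoryless_source =
  fixes D :: nat and p :: "nat \<Rightarrow> real"
  assumes D: "2 \<le> D" and p_pos: "\<forall>i<D. 0 < p i" and p_sum: "(\<Sum>i<D. p i) = 1"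
begin

abbreviation P :: "nat list \<Rightarrow> real" where
  "P \<equiv> word_prob p"

lemma p_le_1: "i < D \<Longrightarrow> p i \<le> 1"
  using member_le_sum[of i "{..<D}" p] p_pos p_sum by (auto intro: less_imp_le)

lemma word_prob_bounds: "set w \<subseteq> {..<D} \<Longrightarrow> 0 < P w \<and> P w \<le> 1"
  by (induction w) (auto simp: word_prob_def p_pos p_le_1 mult_le_one)

lemma word_prob_prefix_le:
  assumes "set v \<subseteq> {..<D}" "prefix u v"
  shows "P v \<le> P u"
proof -
  obtain z where "v = u @ z"
    using assms(2) by (auto simp: prefix_def)
  then show ?thesis
    using word_prob_bounds[of u] word_prob_bounds[of z] assms(1)
    by (simp add: word_prob_append mult_left_le)
qed

lemma sum_word_prob_children: "(\<Sum>s<D. P (w @ [s])) = P w"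
  using p_sum by (simp add: word_prob_append word_prob_def flip: sum_distrib_left)

lemma parsing_trees_sum_word_prob: "L \<in> parsing_trees D \<Longrightarrow> sum P L = 1"
  by (induction rule: parsing_trees.induct) (simp_all add: sum_expand_leaf sum_word_prob_children)

text \<open>The decrease of \<open>\<Sum>\<^sub>x (P x - c)\<^sup>+\<close> caused by splitting a leaf of probability \<open>a\<close>.\<close>
definition hinge_drop :: "real \<Rightarrow> real \<Rightarrow> real" where
  "hinge_drop c a = max 0 (a - c) - (\<Sum>s<D. max 0 (a * p s - c))"

lemma parsing_trees_hinge_sum:
  assumes "L \<in> parsing_trees D"
  shows "(\<Sum>x\<in>L. max 0 (P x - c)) = max 0 (1 - c) - (\<Sum>v\<in>internal_nodes L. hinge_drop c (P v))"
  using assms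
proof (induction rule: parsing_trees.induct)
  case root
  then show ?case
    by (simp add: internal_nodes_def)
next
  case (expand L w)
  have "w \<notin> internal_nodes L"
    using parsing_trees_prefix_free[OF expand.hyps] by (auto simp: internal_nodes_def strict_prefix_def)
  then show ?case
    using expand.IH internal_nodes_expand[OF _ expand.hyps(2)] D
      finite_internal_nodes[OF parsing_trees_finite[OF expand.hyps(1)]]
    by (simp add: sum_expand_leaf[OF expand.hyps] hinge_drop_def word_prob_append word_prob_def)
qed

lemma sum_hinge_increment_le:
  assumes c: "0 < c" and ab: "0 \<le> a" "a \<le> b"
    and S: "S \<subseteq> {..<D}" "S \<noteq> {}" "\<forall>s\<in>S. c < b * p s"
  shows "(\<Sum>s\<in>S. max 0 (b * p s - c) - max 0 (a * p s - c)) \<le> max 0 (b - c) - max 0 (a - c)"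
proof -
  have fin: "finite S"
    using S(1) finite_nat_iff_bounded by blast
  have p_S: "(\<Sum>s\<in>S. p s) \<le> 1"
    using sum_mono2[of "{..<D}" S p] S(1) p_pos p_sum by (auto intro: less_imp_le)
  obtain s where "s < D" "c < b * p s"
    using S by blast
  moreover have "b * p s \<le> b"
    using mult_left_le[OF p_le_1[OF \<open>s < D\<close>]] ab by simp
  ultimately have "c < b"
    by simp
  show ?thesis
  proof (cases "c \<le> a")
    case True
    have "(\<Sum>s\<in>S. max 0 (b * p s - c) - max 0 (a * p s - c)) \<le> (\<Sum>s\<in>S. (b - a) * p s)"
      using S(3) by (intro sum_mono) (auto simp: max_def algebra_simps)
    also have "\<dots> \<le> b - a"
      using mult_left_mono[OF p_S, of "b - a"] ab by (simp add: sum_distrib_left)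
    finally show ?thesis
      using True \<open>c < b\<close> by simp
  next
    case False
    have "(\<Sum>s\<in>S. max 0 (b * p s - c) - max 0 (a * p s - c)) \<le> (\<Sum>s\<in>S. b * p s - c)"
      using S(3) by (intro sum_mono) (auto simp: max_def)
    also have "\<dots> = b * (\<Sum>s\<in>S. p s) - real (card S) * c"
      by (simp add: sum_subtractf sum_distrib_left)
    also have "\<dots> \<le> b * 1 - 1 * c"
    proof (rule diff_mono)
      show "b * (\<Sum>s\<in>S. p s) \<le> b * 1"
        using p_S \<open>c < b\<close> c by (intro mult_left_mono) auto
      have "1 \<le> real (card S)"
        using S(2) fin by (simp add: Suc_le_eq card_gt_0_iff)
      then show "1 * c \<le> real (card S) * c"
        using c by (intro mult_right_mono) auto
    qed
    finally show ?thesis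
      using False \<open>c < b\<close> by simp
  qed
qed

lemma hinge_drop_mono:
  assumes c: "0 < c" and ab: "0 \<le> a" "a \<le> b"
  shows "hinge_drop c a \<le> hinge_drop c b"
proof -
  define S where "S = {s. s < D \<and> c < b * p s}"
  have "(\<Sum>s<D. max 0 (b * p s - c) - max 0 (a * p s - c))
          = (\<Sum>s\<in>S. max 0 (b * p s - c) - max 0 (a * p s - c))"
  proof (rule sum.mono_neutral_right)
    show "\<forall>s\<in>{..<D} - S. max 0 (b * p s - c) - max 0 (a * p s - c) = 0"
    proof
      fix s
      assume "s \<in> {..<D} - S"
      then have "b * p s \<le> c" "a * p s \<le> b * p s"
        using ab p_pos mult_right_mono[of a b "p s"] by (auto simp: S_def)
      then show "max 0 (b * p s - c) - max 0 (a * p s - c) = 0"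
        by simp
    qed
  qed (auto simp: S_def)
  also have "\<dots> \<le> max 0 (b - c) - max 0 (a - c)"
  proof (cases "S = {}")
    case True
    then show ?thesis
      using ab by (simp add: max_def)
  next
    case False
    moreover have "S \<subseteq> {..<D}" "\<forall>s\<in>S. c < b * p s"
      by (auto simp: S_def)
    ultimately show ?thesis
      using sum_hinge_increment_le[OF c ab] by blast
  qed
  finally show ?thesis
    by (simp add: hinge_drop_def sum_subtractf)
qed

definition p_min :: real where
  "p_min = Min (p ` {..<D})"

lemma p_min_pos: "0 < p_min"
  unfolding p_min_def using D p_pos by (subst Min_gr_iff) (auto simp: lessThan_empty_iff)

lemma p_min_le: "i < D \<Longrightarrow> p_min \<le> p i"
  unfolding p_min_def by (rule Min_le) auto

lemma p_min_less_1: "p_min < 1"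
proof -
  have "p 0 + p 1 \<le> (\<Sum>i<D. p i)"
    using sum_mono2[of "{..<D}" "{0, 1}" p] D p_pos by (auto intro: less_imp_le)
  moreover have "0 < p 1"
    using p_pos D by simp
  ultimately show ?thesis
    using p_min_le[of 0] D p_sum by simp
qed

lemma tunstall_threshold:
  assumes "L \<in> tunstall_trees D p"
  obtains q where "\<forall>v\<in>internal_nodes L. q \<le> P v" "\<forall>x\<in>L. p_min * q \<le> P x \<and> P x \<le> q"
proof -
  have "\<exists>q. (\<forall>v\<in>internal_nodes L. q \<le> P v) \<and> (\<forall>x\<in>L. p_min * q \<le> P x \<and> P x \<le> q)"
    using assms
  proof (induction rule: tunstall_trees.induct)
    case root
    show ?case
      using p_min_less_1 by (intro exI[of _ 1]) (simp add: internal_nodes_def)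
  next
    case (expand L w)
    then obtain q where internal: "\<forall>v\<in>internal_nodes L. q \<le> P v"
      and leaves: "\<forall>x\<in>L. p_min * q \<le> P x \<and> P x \<le> q"
      by blast
    have L: "L \<in> parsing_trees D"
      using expand.hyps(1) by (rule tunstall_trees_parsing_trees)
    have "0 < P w"
      using word_prob_bounds parsing_trees_words[OF L expand.hyps(2)] by blast
    have "P w \<le> q"
      using leaves expand.hyps(2) by blast
    then have "p_min * P w \<le> p_min * q"
      using p_min_pos by simp
    then have old: "p_min * P w \<le> P x \<and> P x \<le> P w" if "x \<in> L" for x
      using that leaves expand.hyps(3) by fastforce
    have new: "p_min * P w \<le> P (w @ [s]) \<and> P (w @ [s]) \<le> P w" if "s < D" for s
      using that \<open>0 < P w\<close> p_min_le[OF that] p_le_1[OF that]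
      by (simp add: word_prob_append word_prob_def mult_left_mono mult_left_le)
    let ?L' = "(L - {w}) \<union> (\<lambda>s. w @ [s]) ` {..<D}"
    have "\<forall>v\<in>internal_nodes ?L'. P w \<le> P v"
      using internal \<open>P w \<le> q\<close> internal_nodes_expand[OF _ expand.hyps(2)] D by fastforce
    moreover have "\<forall>x\<in>?L'. p_min * P w \<le> P x \<and> P x \<le> P w"
      using old new by auto
    ultimately show ?case
      by (intro exI[of _ "P w"] conjI)
  qed
  then show ?thesis
    using that by blast
qed

lemma tunstall_leaf_ratio:
  assumes "L \<in> tunstall_trees D p" "x \<in> L"
  shows "P x \<le> 1 / p_min * Min (P ` L)"
proof -
  obtain q where leaves: "\<forall>x\<in>L. p_min * q \<le> P x \<and> P x \<le> q"
    using tunstall_threshold[OF assms(1)] by metis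
  have L: "L \<in> parsing_trees D"
    using assms(1) by (rule tunstall_trees_parsing_trees)
  have "p_min * q \<le> Min (P ` L)"
    using parsing_trees_finite[OF L] assms(2) leaves by (subst Min_ge_iff) auto
  then have "q \<le> 1 / p_min * Min (P ` L)"
    using p_min_pos by (simp add: field_simps)
  moreover have "P x \<le> q"
    using leaves assms(2) by blast
  ultimately show ?thesis
    by linarith
qed

theorem tunstall_minimizes_fdiv_phi:
  assumes L: "L \<in> tunstall_trees D p" and L': "L' \<in> parsing_trees D" and card: "card L' = card L"
    and \<omega>: "0 < \<omega>" "\<omega> < 1"
  shows "fdiv_unif (phi \<omega>) L P \<le> fdiv_unif (phi \<omega>) L' P"
proof -
  have L_parsing: "L \<in> parsing_trees D"
    using L by (rule tunstall_trees_parsing_trees)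
  have D0: "0 < D" and D1: "0 < D - 1"
    using D by simp_all
  then have nonempty: "L \<noteq> {}" "L' \<noteq> {}"
    using parsing_trees_card[OF _ L_parsing] parsing_trees_card[OF _ L'] by auto
  define c where "c = (1 - \<omega>) / (\<omega> * card L)"
  have "0 < c"
    using \<omega> nonempty parsing_trees_finite[OF L_parsing] by (simp add: c_def card_gt_0_iff)
  have card_internal: "card (internal_nodes L') = card (internal_nodes L)"
    using parsing_trees_card[OF _ L_parsing] parsing_trees_card[OF _ L'] card D1 by simp
  obtain q where q_internal: "\<forall>v\<in>internal_nodes L. q \<le> P v"
    and q_leaves: "\<forall>x\<in>L. P x \<le> q"
    using tunstall_threshold[OF L] by metis
  have outside: "P v \<le> q" if "v \<in> internal_nodes L' - internal_nodes L" for v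
  proof -
    have "set v \<subseteq> {..<D}"
      using parsing_trees_internal_words[OF L'] that by blast
    moreover have "v \<notin> internal_nodes L"
      using that by simp
    ultimately obtain x where "x \<in> L" "prefix x v"
      using parsing_trees_complete[OF D0 L_parsing] by meson
    then have "P v \<le> P x" "P x \<le> q"
      using word_prob_prefix_le[OF \<open>set v \<subseteq> {..<D}\<close>] q_leaves by auto
    then show ?thesis
      by linarith
  qed
  text \<open>\<open>hinge_drop c\<close> is monotone only on \<open>[0, \<infinity>)\<close>, hence the clamping by \<open>max 0\<close>.\<close>
  have "mono (\<lambda>a. hinge_drop c (max 0 a))"
    using hinge_drop_mono[OF \<open>0 < c\<close>] by (auto intro: monoI)
  from sum_mono_exchange[OF finite_internal_nodes[OF parsing_trees_finite[OF L']]
      finite_internal_nodes[OF parsing_trees_finite[OF L_parsing]] card_internal this q_internal]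
  have "(\<Sum>v\<in>internal_nodes L'. hinge_drop c (max 0 (P v)))
          \<le> (\<Sum>v\<in>internal_nodes L. hinge_drop c (max 0 (P v)))"
    using outside by blast
  moreover have "max 0 (P v) = P v" if "M \<in> parsing_trees D" "v \<in> internal_nodes M" for M v
    using word_prob_bounds[OF parsing_trees_internal_words[OF that]] by simp
  ultimately have "(\<Sum>v\<in>internal_nodes L'. hinge_drop c (P v)) \<le> (\<Sum>v\<in>internal_nodes L. hinge_drop c (P v))"
    using L' L_parsing by simp
  then show ?thesis
    using fdiv_phi_eq_hinge_sum[OF \<omega>(1) parsing_trees_finite[OF L_parsing] nonempty(1)]
      fdiv_phi_eq_hinge_sum[OF \<omega>(1) parsing_trees_finite[OF L'] nonempty(2)]
      parsing_trees_hinge_sum[OF L_parsing] parsing_trees_hinge_sum[OF L'] \<omega>(1) card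
    by (simp add: c_def)
qed

end

section \<open>The chord bound\<close>

definition chord_bound :: "real \<Rightarrow> real \<Rightarrow> real \<Rightarrow> real" where
  "chord_bound \<omega> \<rho> x = x * phi \<omega> (\<rho> / (1 + (\<rho> - 1) * x)) + (1 - x) * phi \<omega> (1 / (1 + (\<rho> - 1) * x))"

lemma bound_c_eq_Sup_chord_bound: "bound_c \<omega> \<rho> = Sup (chord_bound \<omega> \<rho> ` {0..1})"
  unfolding bound_c_def chord_bound_def ..

lemma isCont_chord_bound:
  assumes "1 < \<rho>" "0 \<le> x"
  shows "isCont (chord_bound \<omega> \<rho>) x"
  unfolding chord_bound_def phi_def using assms
  by (intro continuous_intros) (auto simp: add_pos_nonneg intro!: less_imp_neq[symmetric])

lemma bdd_above_chord_bound:
  assumes "1 < \<rho>"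
  shows "bdd_above (chord_bound \<omega> \<rho> ` {0..1})"
proof -
  have "continuous_on {0..1} (chord_bound \<omega> \<rho>)"
    using isCont_chord_bound[OF assms] by (intro continuous_at_imp_continuous_on) auto
  then show ?thesis
    by (intro bounded_imp_bdd_above compact_imp_bounded compact_continuous_image) auto
qed

lemma chord_bound_le_bound_c:
  assumes "1 < \<rho>" "x \<in> {0..1}"
  shows "chord_bound \<omega> \<rho> x \<le> bound_c \<omega> \<rho>"
  unfolding bound_c_eq_Sup_chord_bound using assms bdd_above_chord_bound by (intro cSup_upper) auto

lemma fdiv_phi_le_bound_c:
  fixes P :: "'a \<Rightarrow> real"
  assumes "finite A" "A \<noteq> {}" and \<beta>: "0 < \<beta>" and \<rho>: "1 < \<rho>"
    and bounds: "\<forall>x\<in>A. \<beta> \<le> P x \<and> P x \<le> \<rho> * \<beta>" and sum: "sum P A = 1"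
  shows "fdiv_unif (phi \<omega>) A P \<le> bound_c \<omega> \<rho>"
proof -
  define N where "N = real (card A)"
  have N: "0 < N"
    using assms by (simp add: N_def card_gt_0_iff)
  have "N * \<beta> \<le> 1" "1 \<le> N * (\<rho> * \<beta>)"
    using sum_mono[of A "\<lambda>_. \<beta>" P] sum_mono[of A P "\<lambda>_. \<rho> * \<beta>"] bounds sum
    by (auto simp: N_def)
  then have lo_le: "\<beta> * N \<le> 1" and hi_ge: "1 \<le> \<rho> * \<beta> * N"
    by (simp_all add: algebra_simps)
  define X where "X = (1 - \<beta> * N) / ((\<rho> - 1) * \<beta> * N)"
  have pos: "0 < (\<rho> - 1) * \<beta> * N"
    using \<beta> \<rho> N by simp
  have X: "X \<in> {0..1}"
    using lo_le hi_ge pos by (auto simp: X_def field_simps)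
  have "1 - X = ((\<rho> - 1) * \<beta> * N - (1 - \<beta> * N)) / ((\<rho> - 1) * \<beta> * N)"
    using pos \<beta> \<rho> N by (simp add: X_def diff_divide_distrib)
  then have one_minus_X: "1 - X = (\<rho> * \<beta> * N - 1) / ((\<rho> - 1) * \<beta> * N)"
    by (simp add: algebra_simps)
  have denom: "1 + (\<rho> - 1) * X = 1 / (\<beta> * N)"
    using pos \<beta> N by (simp add: X_def field_simps)
  have sum_N: "(\<Sum>x\<in>A. P x * N) = N"
    using sum by (simp flip: sum_distrib_right)
  have "(\<Sum>x\<in>A. phi \<omega> (P x * N))
          \<le> ((\<Sum>x\<in>A. P x * N) - card A * (\<beta> * N)) / (\<rho> * \<beta> * N - \<beta> * N) * phi \<omega> (\<rho> * \<beta> * N)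
            + (card A * (\<rho> * \<beta> * N) - (\<Sum>x\<in>A. P x * N)) / (\<rho> * \<beta> * N - \<beta> * N) * phi \<omega> (\<beta> * N)"
    using bounds \<beta> \<rho> N \<open>finite A\<close>
    by (intro convex_sum_le_chord convex_on_subset[OF convex_on_phi]) (auto intro: mult_right_mono)
  then have chord: "(\<Sum>x\<in>A. phi \<omega> (P x * N))
          \<le> (N - N * (\<beta> * N)) / (\<rho> * \<beta> * N - \<beta> * N) * phi \<omega> (\<rho> * \<beta> * N)
            + (N * (\<rho> * \<beta> * N) - N) / (\<rho> * \<beta> * N - \<beta> * N) * phi \<omega> (\<beta> * N)"
    unfolding sum_N by (simp add: N_def)
  have "fdiv_unif (phi \<omega>) A P = (\<Sum>x\<in>A. phi \<omega> (P x * N)) / N"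
    by (simp add: fdiv_unif_def N_def sum_divide_distrib)
  also have "\<dots> \<le> ((N - N * (\<beta> * N)) / (\<rho> * \<beta> * N - \<beta> * N) * phi \<omega> (\<rho> * \<beta> * N)
                   + (N * (\<rho> * \<beta> * N) - N) / (\<rho> * \<beta> * N - \<beta> * N) * phi \<omega> (\<beta> * N)) / N"
    using chord N by (simp add: divide_right_mono)
  also have "\<dots> = X * phi \<omega> (\<rho> * \<beta> * N) + (1 - X) * phi \<omega> (\<beta> * N)"
    unfolding one_minus_X using N by (simp add: X_def field_simps)
  also have "\<dots> = chord_bound \<omega> \<rho> X"
    unfolding chord_bound_def denom by (simp add: mult.assoc)
  also have "\<dots> \<le> bound_c \<omega> \<rho>"
    using chord_bound_le_bound_c[OF \<rho> X] .
  finally show ?thesis .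
qed

section \<open>The distributions \<open>Q\<^sub>\<beta>\<close>\<close>

lemma sum_Q_beta:
  fixes g :: "real \<Rightarrow> real"
  assumes i: "i_beta \<rho> n \<beta> = k" and "k \<le> n"
  shows "(\<Sum>j\<in>{1..n}. g (Q_beta \<rho> n \<beta> j)) = real k * g (\<rho> * \<beta>)
     + (if k < n then g (1 - (real n + real k * (\<rho> - 1) - 1) * \<beta>) + real (n - k - 1) * g \<beta> else 0)"
proof -
  have upper: "(\<Sum>j\<in>{k<..n}. g (Q_beta \<rho> n \<beta> j)) =
      (if k < n then g (1 - (real n + real k * (\<rho> - 1) - 1) * \<beta>) + real (n - k - 1) * g \<beta> else 0)"
  proof (cases "k < n")
    case True
    then have "{k<..n} = insert (k + 1) {k + 1<..n}"
      by auto
    moreover have "(\<Sum>j\<in>{k + 1<..n}. g (Q_beta \<rho> n \<beta> j)) = real (n - k - 1) * g \<beta>"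
      by (simp add: Q_beta_def Let_def i)
    ultimately show ?thesis
      using True by (simp add: Q_beta_def Let_def i)
  qed (use \<open>k \<le> n\<close> in simp)
  have "(\<Sum>j\<in>{1..n}. g (Q_beta \<rho> n \<beta> j)) = (\<Sum>j\<in>{1..k} \<union> {k<..n}. g (Q_beta \<rho> n \<beta> j))"
    using \<open>k \<le> n\<close> by (intro sum.cong) auto
  also have "\<dots> = (\<Sum>j\<in>{1..k}. g (Q_beta \<rho> n \<beta> j)) + (\<Sum>j\<in>{k<..n}. g (Q_beta \<rho> n \<beta> j))"
    by (rule sum.union_disjoint) auto
  finally show ?thesis
    unfolding upper by (simp add: Q_beta_def Let_def i)
qed

lemma i_beta_eqI:
  assumes "0 < \<beta>" "1 < \<rho>" "real k * ((\<rho> - 1) * \<beta>) \<le> 1 - real n * \<beta>"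
    "1 - real n * \<beta> < (real k + 1) * ((\<rho> - 1) * \<beta>)"
  shows "i_beta \<rho> n \<beta> = k"
proof -
  have "\<lfloor>(1 - real n * \<beta>) / ((\<rho> - 1) * \<beta>)\<rfloor> = int k"
    unfolding floor_eq_iff using assms by (simp add: field_simps)
  then show ?thesis
    unfolding i_beta_def by simp
qed

lemma Gamma_pos:
  assumes "1 \<le> n" "1 < \<rho>" "\<beta> \<in> Gamma n \<rho>"
  shows "0 < \<beta>"
proof -
  have "0 < 1 / (1 + (real n - 1) * \<rho>)"
    using assms by (simp add: add_pos_nonneg)
  then show ?thesis
    using assms(3) unfolding Gamma_def by (meson atLeastAtMost_iff less_le_trans)
qed

lemma Gamma_nonempty:
  assumes "1 \<le> n" "1 < \<rho>"
  shows "Gamma n \<rho> \<noteq> {}"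
proof -
  have "real n \<le> 1 + (real n - 1) * \<rho>"
    using mult_left_mono[of 1 \<rho> "real n - 1"] assms by simp
  then show ?thesis
    using assms unfolding Gamma_def by (auto intro!: divide_left_mono)
qed

lemma Q_beta_bounds:
  assumes n: "1 \<le> n" and \<rho>: "1 < \<rho>" and \<beta>: "\<beta> \<in> Gamma n \<rho>"
  shows "\<forall>j\<in>{1..n}. \<beta> \<le> Q_beta \<rho> n \<beta> j \<and> Q_beta \<rho> n \<beta> j \<le> \<rho> * \<beta>"
    and "(\<Sum>j\<in>{1..n}. Q_beta \<rho> n \<beta> j) = 1"
proof -
  have \<beta>_pos: "0 < \<beta>"
    using Gamma_pos assms by blast
  have step: "0 < (\<rho> - 1) * \<beta>"
    using \<beta>_pos \<rho> by simp
  define Y where "Y = (1 - real n * \<beta>) / ((\<rho> - 1) * \<beta>)"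
  define i where "i = i_beta \<rho> n \<beta>"
  have "real n * \<beta> \<le> 1"
    using \<beta> n unfolding Gamma_def by (simp add: field_simps)
  then have Y_nonneg: "0 \<le> Y"
    unfolding Y_def using \<beta>_pos \<rho> by simp
  have "0 < 1 + (real n - 1) * \<rho>"
    using n \<rho> by (simp add: add_pos_nonneg)
  then have "1 \<le> \<beta> * (1 + (real n - 1) * \<rho>)"
    using \<beta> unfolding Gamma_def by (simp add: divide_le_eq mult.commute)
  then have "1 - real n * \<beta> \<le> (real n - 1) * ((\<rho> - 1) * \<beta>)"
    by (simp add: algebra_simps)
  then have "Y \<le> real n - 1"
    unfolding Y_def using step by (simp add: divide_le_eq)
  moreover have i: "real i \<le> Y" "Y < real i + 1"
    unfolding i_def i_beta_def Y_def[symmetric] using Y_nonneg by linarith+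
  ultimately have "i < n"
    using n by linarith
  define mid where "mid = 1 - (real n + real i * (\<rho> - 1) - 1) * \<beta>"
  have "Y * ((\<rho> - 1) * \<beta>) = 1 - real n * \<beta>"
    unfolding Y_def using \<beta>_pos \<rho> by simp
  then have mid_eq: "mid = \<beta> + (Y - real i) * ((\<rho> - 1) * \<beta>)"
    unfolding mid_def by (simp add: algebra_simps)
  have "0 \<le> (Y - real i) * ((\<rho> - 1) * \<beta>)" "(Y - real i) * ((\<rho> - 1) * \<beta>) \<le> 1 * ((\<rho> - 1) * \<beta>)"
    using i step mult_right_mono[of "Y - real i" 1 "(\<rho> - 1) * \<beta>"] by auto
  then have "\<beta> \<le> mid" "mid \<le> \<rho> * \<beta>"
    unfolding mid_eq by (simp_all add: algebra_simps)
  then show "\<forall>j\<in>{1..n}. \<beta> \<le> Q_beta \<rho> n \<beta> j \<and> Q_beta \<rho> n \<beta> j \<le> \<rho> * \<beta>"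
    unfolding Q_beta_def Let_def i_def[symmetric] mid_def[symmetric] using \<beta>_pos \<rho> by auto
  have "(\<Sum>j\<in>{1..n}. Q_beta \<rho> n \<beta> j) = real i * (\<rho> * \<beta>) + mid + real (n - i - 1) * \<beta>"
    using sum_Q_beta[of \<rho> n \<beta> i "\<lambda>x. x"] \<open>i < n\<close> by (simp add: i_def mid_def)
  also have "\<dots> = 1"
    using \<open>i < n\<close> by (simp add: mid_def of_nat_diff algebra_simps)
  finally show "(\<Sum>j\<in>{1..n}. Q_beta \<rho> n \<beta> j) = 1" .
qed

definition inner_points :: "'a set \<Rightarrow> ('a \<Rightarrow> real) \<Rightarrow> real \<Rightarrow> real \<Rightarrow> 'a set" where
  "inner_points A P lo hi = {x\<in>A. lo < P x \<and> P x < hi}"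

lemma sum_at_most_one_inner_point:
  fixes P :: "'a \<Rightarrow> real"
  assumes fin: "finite A" and bounds: "\<forall>x\<in>A. lo \<le> P x \<and> P x \<le> hi"
    and inner: "card (inner_points A P lo hi) \<le> 1" and not_top: "\<exists>x\<in>A. P x \<noteq> hi"
  obtains m where "m \<in> A" "P m \<noteq> hi"
    "\<And>f :: real \<Rightarrow> real. (\<Sum>x\<in>A. f (P x))
       = real (card {x\<in>A. P x = hi}) * f hi + f (P m) + real (card A - card {x\<in>A. P x = hi} - 1) * f lo"
proof -
  define K where "K = {x\<in>A. P x = hi}"
  define I where "I = inner_points A P lo hi"
  have K: "K \<subseteq> A" "finite K" and "finite I"
    using fin by (auto simp: K_def I_def inner_points_def)
  obtain m where m: "m \<in> A - K" and "I \<subseteq> {m}"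
  proof (cases "I = {}")
    case True
    obtain x where "x \<in> A" "P x \<noteq> hi"
      using not_top by blast
    then show ?thesis
      using that[of x] True by (simp add: K_def)
  next
    case False
    then obtain m where "m \<in> I"
      by blast
    moreover have "card I \<le> Suc 0"
      using inner by (simp add: I_def)
    ultimately have "I \<subseteq> {m}"
      using \<open>finite I\<close> card_le_Suc0_iff_eq[of I] by blast
    moreover have "m \<in> A - K"
      using \<open>m \<in> I\<close> by (auto simp: I_def K_def inner_points_def)
    ultimately show ?thesis
      using that[of m] by blast
  qed
  have rest: "P x = lo" if "x \<in> A - K - {m}" for x
  proof -
    have "x \<notin> I"
      using that \<open>I \<subseteq> {m}\<close> by auto
    then show ?thesis
      using that bounds by (auto simp: K_def I_def inner_points_def)
  qed
  have "(\<Sum>x\<in>A. f (P x)) = real (card K) * f hi + f (P m) + real (card A - card K - 1) * f lo"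
    for f :: "real \<Rightarrow> real"
  proof -
    have "(\<Sum>x\<in>A. f (P x)) = (\<Sum>x\<in>A - K. f (P x)) + (\<Sum>x\<in>K. f (P x))"
      using fin K by (simp add: sum.subset_diff)
    also have "(\<Sum>x\<in>A - K. f (P x)) = f (P m) + (\<Sum>x\<in>A - K - {m}. f (P x))"
      using fin m by (simp add: sum.remove)
    finally have "(\<Sum>x\<in>A. f (P x)) = (\<Sum>x\<in>K. f (P x)) + (f (P m) + (\<Sum>x\<in>A - K - {m}. f (P x)))"
      by simp
    moreover have "(\<Sum>x\<in>A - K - {m}. f (P x)) = (\<Sum>x\<in>A - K - {m}. f lo)"
      using rest by (intro sum.cong) auto
    moreover have "card (A - K - {m}) = card A - card K - 1"
      using K m fin by (simp add: card_Diff_subset)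
    moreover have "(\<Sum>x\<in>K. f (P x)) = real (card K) * f hi"
      by (simp add: K_def)
    ultimately show ?thesis
      by simp
  qed
  then show ?thesis
    using that[of m] m unfolding K_def by blast
qed

lemma sum_eq_Q_beta_if_one_inner_point:
  fixes g :: "real \<Rightarrow> real" and P :: "'a \<Rightarrow> real"
  assumes fin: "finite A" and \<beta>: "0 < \<beta>" and \<rho>: "1 < \<rho>"
    and bounds: "\<forall>x\<in>A. \<beta> \<le> P x \<and> P x \<le> \<rho> * \<beta>" and sum: "sum P A = 1"
    and inner: "card (inner_points A P \<beta> (\<rho> * \<beta>)) \<le> 1"
  shows "(\<Sum>x\<in>A. g (P x)) = (\<Sum>j\<in>{1..card A}. g (Q_beta \<rho> (card A) \<beta> j))"
proof (cases "\<forall>x\<in>A. P x = \<rho> * \<beta>")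
  case True
  then have "1 = real (card A) * (\<rho> * \<beta>)"
    using sum by simp
  then have "i_beta \<rho> (card A) \<beta> = card A"
    using \<beta> \<rho> by (intro i_beta_eqI) (auto simp: algebra_simps)
  from sum_Q_beta[OF this order.refl, of g] show ?thesis
    using True by simp
next
  case False
  define k where "k = card {x\<in>A. P x = \<rho> * \<beta>}"
  obtain m where m: "m \<in> A" "P m \<noteq> \<rho> * \<beta>"
    and sum_A: "\<And>f :: real \<Rightarrow> real. (\<Sum>x\<in>A. f (P x))
                  = real k * f (\<rho> * \<beta>) + f (P m) + real (card A - k - 1) * f \<beta>"
    using sum_at_most_one_inner_point[OF fin bounds inner] False unfolding k_def by blast
  have "k < card A"
    using m fin by (auto simp: k_def intro!: psubset_card_mono)
  have mid: "P m = 1 - (real (card A) + real k * (\<rho> - 1) - 1) * \<beta>"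
    using sum_A[of "\<lambda>x. x"] sum \<open>k < card A\<close> by (simp add: of_nat_diff algebra_simps)
  have "\<beta> \<le> P m" "P m < \<rho> * \<beta>"
    using m bounds by (auto simp: less_le)
  then have "i_beta \<rho> (card A) \<beta> = k"
    using \<beta> \<rho> mid by (intro i_beta_eqI) (auto simp: algebra_simps)
  from sum_Q_beta[OF this less_imp_le[OF \<open>k < card A\<close>], of g] show ?thesis
    using sum_A[of g] mid \<open>k < card A\<close> by simp
qed

text \<open>Two inner masses are pushed apart until one of them reaches the boundary.\<close>
lemma convex_spread_step:
  fixes g :: "real \<Rightarrow> real" and P :: "'a \<Rightarrow> real"
  assumes g: "convex_on UNIV g" and fin: "finite A" and bounds: "\<forall>x\<in>A. lo \<le> P x \<and> P x \<le> hi"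
    and ab: "a \<in> inner_points A P lo hi" "b \<in> inner_points A P lo hi" "a \<noteq> b" "P a \<le> P b"
  obtains P' where "\<forall>x\<in>A. lo \<le> P' x \<and> P' x \<le> hi" "sum P' A = sum P A"
    "(\<Sum>x\<in>A. g (P x)) \<le> (\<Sum>x\<in>A. g (P' x))" "inner_points A P' lo hi \<subset> inner_points A P lo hi"
proof
  define d where "d = min (P a - lo) (hi - P b)"
  define P' where "P' = P(a := P a - d, b := P b + d)"
  have "a \<in> A" "b \<in> A" "lo < P a" "P b < hi"
    using ab by (auto simp: inner_points_def)
  then have d: "0 \<le> d" "lo \<le> P a - d" "P b + d \<le> hi"
    by (simp_all add: d_def)
  moreover have "P a \<le> hi" "lo \<le> P b"
    using bounds \<open>a \<in> A\<close> \<open>b \<in> A\<close> by auto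
  ultimately show "\<forall>x\<in>A. lo \<le> P' x \<and> P' x \<le> hi"
    using bounds ab(3) unfolding P'_def by simp
  show "sum P' A = sum P A"
    using sum_update_pair[of A a b "\<lambda>x. x" P] fin \<open>a \<in> A\<close> \<open>b \<in> A\<close> ab(3) by (simp add: P'_def)
  show "(\<Sum>x\<in>A. g (P x)) \<le> (\<Sum>x\<in>A. g (P' x))"
    using sum_update_pair[of A a b g P] convex_on_spread[OF g ab(4) d(1)] fin \<open>a \<in> A\<close> \<open>b \<in> A\<close> ab(3)
    by (simp add: P'_def)
  have "x \<in> inner_points A P lo hi" if "x \<in> inner_points A P' lo hi" for x
    using that ab by (cases "x \<in> {a, b}") (auto simp: inner_points_def P'_def)
  moreover have "P' a = lo \<or> P' b = hi"
    using ab(3) by (auto simp: P'_def d_def min_def)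
  then have "a \<notin> inner_points A P' lo hi \<or> b \<notin> inner_points A P' lo hi"
    by (auto simp: inner_points_def)
  ultimately show "inner_points A P' lo hi \<subset> inner_points A P lo hi"
    using ab(1,2) by blast
qed

lemma sum_convex_le_Q_beta:
  fixes g :: "real \<Rightarrow> real" and P :: "'a \<Rightarrow> real"
  assumes g: "convex_on UNIV g" and fin: "finite A" and \<beta>: "0 < \<beta>" and \<rho>: "1 < \<rho>"
    and bounds: "\<forall>x\<in>A. \<beta> \<le> P x \<and> P x \<le> \<rho> * \<beta>" and sum: "sum P A = 1"
  shows "(\<Sum>x\<in>A. g (P x)) \<le> (\<Sum>j\<in>{1..card A}. g (Q_beta \<rho> (card A) \<beta> j))"
  using bounds sum
proof (induction "card (inner_points A P \<beta> (\<rho> * \<beta>))" arbitrary: P rule: less_induct)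
  case less
  let ?M = "inner_points A P \<beta> (\<rho> * \<beta>)"
  show ?case
  proof (cases "card ?M \<le> 1")
    case True
    then show ?thesis
      using sum_eq_Q_beta_if_one_inner_point[OF fin \<beta> \<rho> less.prems] by simp
  next
    case False
    have "finite ?M"
      using fin by (simp add: inner_points_def)
    then obtain a0 b0 where "a0 \<in> ?M" "b0 \<in> ?M" "a0 \<noteq> b0"
      using False card_le_Suc0_iff_eq[of ?M] by auto
    then obtain a b where ab: "a \<in> ?M" "b \<in> ?M" "a \<noteq> b" "P a \<le> P b"
      by (cases "P a0 \<le> P b0") auto
    obtain P' where "\<forall>x\<in>A. \<beta> \<le> P' x \<and> P' x \<le> \<rho> * \<beta>" "sum P' A = 1"
      and "(\<Sum>x\<in>A. g (P x)) \<le> (\<Sum>x\<in>A. g (P' x))" and "inner_points A P' \<beta> (\<rho> * \<beta>) \<subset> ?M"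
      using convex_spread_step[OF g fin less.prems(1) ab] less.prems(2) by metis
    moreover from this(4) have "card (inner_points A P' \<beta> (\<rho> * \<beta>)) < card ?M"
      using \<open>finite ?M\<close> by (rule psubset_card_mono[rotated])
    ultimately show ?thesis
      using less.hyps by fastforce
  qed
qed

lemma fdiv_Q_beta_le_bound_c:
  assumes "1 \<le> n" "1 < \<rho>" "\<beta> \<in> Gamma n \<rho>"
  shows "fdiv_unif (phi \<omega>) {1..n} (Q_beta \<rho> n \<beta>) \<le> bound_c \<omega> \<rho>"
  using fdiv_phi_le_bound_c[of "{1..n}" \<beta> \<rho> "Q_beta \<rho> n \<beta>" \<omega>] Q_beta_bounds[OF assms]
    Gamma_pos[OF assms] assms by auto

lemma bdd_above_fdiv_Q_beta:
  assumes "1 \<le> n" "1 < \<rho>"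
  shows "bdd_above ((\<lambda>\<beta>. fdiv_unif (phi \<omega>) {1..n} (Q_beta \<rho> n \<beta>)) ` Gamma n \<rho>)"
  using fdiv_Q_beta_le_bound_c[OF assms] by (intro bdd_aboveI2) auto

lemma fdiv_Q_beta_le_bound_b:
  assumes "1 \<le> n" "1 < \<rho>" "\<beta> \<in> Gamma n \<rho>"
  shows "fdiv_unif (phi \<omega>) {1..n} (Q_beta \<rho> n \<beta>) \<le> bound_b \<omega> \<rho> n"
  unfolding bound_b_def using bdd_above_fdiv_Q_beta assms by (intro cSup_upper) auto

lemma bound_b_le_bound_c:
  assumes "1 \<le> n" "1 < \<rho>"
  shows "bound_b \<omega> \<rho> n \<le> bound_c \<omega> \<rho>"
  unfolding bound_b_def using fdiv_Q_beta_le_bound_c[OF assms] Gamma_nonempty[OF assms]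
  by (intro cSup_least) auto

lemma Min_in_Gamma:
  fixes P :: "'a \<Rightarrow> real"
  assumes fin: "finite A" "A \<noteq> {}" and \<rho>: "1 < \<rho>"
    and ratio: "\<forall>x\<in>A. P x \<le> \<rho> * Min (P ` A)" and sum: "sum P A = 1"
  shows "Min (P ` A) \<in> Gamma (card A) \<rho>"
proof -
  define \<beta> where "\<beta> = Min (P ` A)"
  define n where "n = card A"
  have n: "1 \<le> n"
    using fin by (simp add: n_def Suc_le_eq card_gt_0_iff)
  obtain x0 where x0: "x0 \<in> A" "P x0 = \<beta>"
    using fin by (metis Min_in \<beta>_def finite_imageI image_iff image_is_empty)
  have "(\<Sum>x\<in>A. \<beta>) \<le> sum P A"
    using fin by (intro sum_mono) (simp add: \<beta>_def)
  then have "\<beta> \<le> 1 / real n"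
    using n sum by (simp add: n_def field_simps)
  moreover have "1 \<le> \<beta> * (1 + (real n - 1) * \<rho>)"
  proof -
    have "1 = P x0 + sum P (A - {x0})"
      using fin x0 sum by (simp add: sum.remove)
    also have "sum P (A - {x0}) \<le> (\<Sum>x\<in>A - {x0}. \<rho> * \<beta>)"
      using ratio by (intro sum_mono) (simp add: \<beta>_def)
    also have "(\<Sum>x\<in>A - {x0}. \<rho> * \<beta>) = (real n - 1) * (\<rho> * \<beta>)"
      using fin x0 n by (simp add: n_def of_nat_diff)
    finally show ?thesis
      using x0 by (simp add: algebra_simps)
  qed
  then have "1 / (1 + (real n - 1) * \<rho>) \<le> \<beta>"
    using n \<rho> by (simp add: divide_le_eq mult.commute add_pos_nonneg)
  ultimately show ?thesis
    by (simp add: Gamma_def \<beta>_def n_def)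
qed

lemma fdiv_phi_le_bound_b:
  fixes P :: "'a \<Rightarrow> real"
  assumes fin: "finite A" "A \<noteq> {}" and \<rho>: "1 < \<rho>" and pos: "0 < Min (P ` A)"
    and ratio: "\<forall>x\<in>A. P x \<le> \<rho> * Min (P ` A)" and sum: "sum P A = 1"
  shows "fdiv_unif (phi \<omega>) A P \<le> bound_b \<omega> \<rho> (card A)"
proof -
  define \<beta> where "\<beta> = Min (P ` A)"
  define n where "n = card A"
  have n: "1 \<le> n"
    using fin by (simp add: n_def Suc_le_eq card_gt_0_iff)
  have bounds: "\<forall>x\<in>A. \<beta> \<le> P x \<and> P x \<le> \<rho> * \<beta>"
    using ratio fin by (simp add: \<beta>_def)
  have "fdiv_unif (phi \<omega>) A P = (\<Sum>x\<in>A. 1 / real n * phi \<omega> (P x * real n))"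
    by (simp add: fdiv_unif_def n_def)
  also have "\<dots> \<le> (\<Sum>j\<in>{1..n}. 1 / real n * phi \<omega> (Q_beta \<rho> n \<beta> j * real n))"
    using sum_convex_le_Q_beta[OF convex_on_phi_scaled fin(1) _ \<rho> bounds sum] pos
    by (simp add: \<beta>_def n_def)
  also have "\<dots> = fdiv_unif (phi \<omega>) {1..n} (Q_beta \<rho> n \<beta>)"
    by (simp add: fdiv_unif_def)
  also have "\<dots> \<le> bound_b \<omega> \<rho> n"
    using fdiv_Q_beta_le_bound_b[OF n \<rho>] Min_in_Gamma[OF fin \<rho> ratio sum] by (simp add: \<beta>_def n_def)
  finally show ?thesis
    by (simp add: n_def)
qed

lemma fdiv_Q_beta_eq_chord_bound:
  assumes m: "1 \<le> m" and k: "k < m" and \<rho>: "1 < \<rho>"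
  defines "\<beta> \<equiv> 1 / (real m + real k * (\<rho> - 1))"
  shows "\<beta> \<in> Gamma m \<rho>"
    and "fdiv_unif (phi \<omega>) {1..m} (Q_beta \<rho> m \<beta>) = chord_bound \<omega> \<rho> (real k / real m)"
proof -
  have denom: "0 < real m + real k * (\<rho> - 1)"
    using m \<rho> by (simp add: add_pos_nonneg)
  then have \<beta>: "0 < \<beta>" "\<beta> * (real m + real k * (\<rho> - 1)) = 1"
    by (simp_all add: \<beta>_def)
  have "real k * (\<rho> - 1) \<le> (real m - 1) * (\<rho> - 1)"
    using k \<rho> by (intro mult_right_mono) auto
  then have "real m + real k * (\<rho> - 1) \<le> 1 + (real m - 1) * \<rho>"
    by (simp add: algebra_simps)
  then show "\<beta> \<in> Gamma m \<rho>"
    unfolding Gamma_def \<beta>_def using m \<rho> denom by (auto intro!: divide_left_mono)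
  have "i_beta \<rho> m \<beta> = k"
    using \<beta> \<rho> by (intro i_beta_eqI) (auto simp: algebra_simps)
  have mid: "1 - (real m + real k * (\<rho> - 1) - 1) * \<beta> = \<beta>"
    using \<beta>(2) by (simp add: algebra_simps)
  define g where "g v = 1 / real m * phi \<omega> (v * real m)" for v
  have "fdiv_unif (phi \<omega>) {1..m} (Q_beta \<rho> m \<beta>) = (\<Sum>j\<in>{1..m}. g (Q_beta \<rho> m \<beta> j))"
    by (simp add: fdiv_unif_def g_def)
  also have "\<dots> = real k * g (\<rho> * \<beta>) + (1 + real (m - k - 1)) * g \<beta>"
    using sum_Q_beta[OF \<open>i_beta \<rho> m \<beta> = k\<close> less_imp_le[OF k], of g] k unfolding mid
    by (simp add: algebra_simps)
  also have "\<dots> = real k / real m * phi \<omega> (\<rho> * \<beta> * real m) + (1 - real k / real m) * phi \<omega> (\<beta> * real m)"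
    using k m by (simp add: g_def of_nat_diff field_simps)
  finally have "fdiv_unif (phi \<omega>) {1..m} (Q_beta \<rho> m \<beta>)
          = real k / real m * phi \<omega> (\<rho> * \<beta> * real m) + (1 - real k / real m) * phi \<omega> (\<beta> * real m)" .
  moreover have "\<beta> * real m = 1 / (1 + (\<rho> - 1) * (real k / real m))"
    using m denom by (simp add: \<beta>_def field_simps)
  ultimately show "fdiv_unif (phi \<omega>) {1..m} (Q_beta \<rho> m \<beta>) = chord_bound \<omega> \<rho> (real k / real m)"
    by (simp add: chord_bound_def mult.assoc)
qed

lemma fractions_tendsto:
  fixes x :: real
  assumes "x \<in> {0..1}"
  obtains k :: "nat \<Rightarrow> nat" where "\<And>m. 1 \<le> m \<Longrightarrow> k m < m" "(\<lambda>m. real (k m) / real m) \<longlonglongrightarrow> x"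
proof
  define k where "k m = nat \<lfloor>x * (real m - 1)\<rfloor>" for m :: nat
  have k: "x * (real m - 1) - 1 \<le> real (k m)" "real (k m) \<le> x * (real m - 1)" if "1 \<le> m" for m
    using assms that by (auto simp: k_def)
  show "k m < m" if "1 \<le> m" for m
  proof -
    have "x * (real m - 1) \<le> 1 * (real m - 1)"
      using assms that by (intro mult_right_mono) auto
    with k(2)[OF that] have "real (k m) \<le> 1 * (real m - 1)"
      by (rule order_trans)
    then have "real (k m) < real m"
      by simp
    then show ?thesis
      by simp
  qed
  have "x - (x + 1) * (1 / real m) \<le> real (k m) / real m" "real (k m) / real m \<le> x"
    if "1 \<le> m" for m
  proof -
    have "x - (x + 1) * (1 / real m) = (x * (real m - 1) - 1) / real m"
      using that by (simp add: field_simps)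
    also have "\<dots> \<le> real (k m) / real m"
      using k(1)[OF that] by (simp add: divide_right_mono)
    finally show "x - (x + 1) * (1 / real m) \<le> real (k m) / real m" .
    have "real (k m) \<le> x * real m"
      using k(2)[OF that] assms by (simp add: algebra_simps)
    then show "real (k m) / real m \<le> x"
      using that by (simp add: divide_le_eq)
  qed
  note bounds = this
  have "eventually (\<lambda>m. x - (x + 1) * (1 / real m) \<le> real (k m) / real m) sequentially"
    using eventually_ge_at_top[of "1::nat"] by (rule eventually_mono) (rule bounds(1))
  moreover have "eventually (\<lambda>m. real (k m) / real m \<le> x) sequentially"
    using eventually_ge_at_top[of "1::nat"] by (rule eventually_mono) (rule bounds(2))
  moreover have "(\<lambda>m. x - (x + 1) * (1 / real m)) \<longlonglongrightarrow> x"
    using tendsto_diff[OF tendsto_const[of x] tendsto_mult[OF tendsto_const[of "x + 1"] lim_1_over_n]]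
    by simp
  ultimately show "(\<lambda>m. real (k m) / real m) \<longlonglongrightarrow> x"
    by (rule tendsto_sandwich[OF _ _ _ tendsto_const])
qed

lemma bound_b_tendsto_bound_c:
  assumes \<rho>: "1 < \<rho>"
  shows "(\<lambda>m. bound_b \<omega> \<rho> m) \<longlonglongrightarrow> bound_c \<omega> \<rho>"
proof (rule order_tendstoI)
  fix a
  assume "a < bound_c \<omega> \<rho>"
  then obtain x where x: "x \<in> {0..1}" "a < chord_bound \<omega> \<rho> x"
    using less_cSup_iff[OF _ bdd_above_chord_bound[OF \<rho>]] by (auto simp: bound_c_eq_Sup_chord_bound)
  obtain k where k: "\<And>m. 1 \<le> m \<Longrightarrow> k m < m" and lim: "(\<lambda>m. real (k m) / real m) \<longlonglongrightarrow> x"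
    using fractions_tendsto[OF x(1)] by blast
  have "(\<lambda>m. chord_bound \<omega> \<rho> (real (k m) / real m)) \<longlonglongrightarrow> chord_bound \<omega> \<rho> x"
    using isCont_tendsto_compose[OF isCont_chord_bound lim] \<rho> x by simp
  then have "eventually (\<lambda>m. a < chord_bound \<omega> \<rho> (real (k m) / real m)) sequentially"
    using x(2) by (rule order_tendstoD)
  then show "eventually (\<lambda>m. a < bound_b \<omega> \<rho> m) sequentially"
    using eventually_ge_at_top[of 1]
  proof eventually_elim
    case (elim m)
    note Q = fdiv_Q_beta_eq_chord_bound[OF elim(2) k[OF elim(2)] \<rho>]
    show ?case
      using elim(1) fdiv_Q_beta_le_bound_b[OF elim(2) \<rho> Q(1), of \<omega>] unfolding Q(2)[of \<omega>] by simp
  qed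
next
  fix a
  assume a: "bound_c \<omega> \<rho> < a"
  show "eventually (\<lambda>m. bound_b \<omega> \<rho> m < a) sequentially"
    using eventually_ge_at_top[of 1]
  proof eventually_elim
    case (elim m)
    then show ?case
      using bound_b_le_bound_c[OF elim \<rho>, of \<omega>] a by simp
  qed
qed

section \<open>Integral representation\<close>

definition phi_kernel :: "real \<Rightarrow> real \<Rightarrow> real" where
  "phi_kernel t u = min u 1 - min (u + 1 - t) 1"

text \<open>An antiderivative of \<open>u \<mapsto> phi_kernel t u * f''(u)\<close> (integrate by parts on each
  interval where \<open>phi_kernel t\<close> is affine).\<close>
definition phi_kernel_primitive :: "(real \<Rightarrow> real) \<Rightarrow> real \<Rightarrow> real \<Rightarrow> real" where
  "phi_kernel_primitive f t u = phi_kernel t u * deriv f u - f (min u 1) + f (min u t)"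

lemma phi_eq_kernel:
  assumes "0 < \<omega>"
  shows "phi \<omega> t = \<omega> * phi_kernel t ((1 - \<omega>) / \<omega>)"
proof -
  have u: "\<omega> * ((1 - \<omega>) / \<omega>) = 1 - \<omega>"
    using assms by simp
  then have "\<omega> * ((1 - \<omega>) / \<omega> + 1 - t) = 1 - \<omega> * t"
    by (simp add: algebra_simps)
  then have "\<omega> * min ((1 - \<omega>) / \<omega>) 1 = min (1 - \<omega>) \<omega>"
    "\<omega> * min ((1 - \<omega>) / \<omega> + 1 - t) 1 = min (1 - \<omega> * t) \<omega>"
    using assms u by (simp_all add: min_mult_distrib_left)
  then show ?thesis
    unfolding phi_def phi_kernel_def by (simp add: right_diff_distrib min.commute)
qed

lemma has_real_derivative_min_const:
  assumes "u \<noteq> c"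
  shows "((\<lambda>u. min u c) has_real_derivative (if u < c then 1 else 0)) (at u)"
proof (cases "u < c")
  case True
  have "((\<lambda>u. min u c) has_real_derivative 1) (at u)"
    by (rule has_field_derivative_transform_within_open[OF DERIV_ident, where S = "{..<c}"])
      (use True in auto)
  then show ?thesis
    using True by simp
next
  case False
  have "((\<lambda>u. min u c) has_real_derivative 0) (at u)"
    by (rule has_field_derivative_transform_within_open[OF DERIV_const, where S = "{c<..}"])
      (use False assms in auto)
  then show ?thesis
    using False by simp
qed

lemma has_real_derivative_phi_kernel_primitive:
  assumes f: "\<forall>t>0. f differentiable (at t) \<and> deriv f differentiable (at t)"
    and "0 < u" "0 < t" "u \<noteq> 1" "u \<noteq> t"
  shows "(phi_kernel_primitive f t has_real_derivative phi_kernel t u * deriv (deriv f) u) (at u)"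
proof -
  have df: "(f has_real_derivative deriv f x) (at x)" "(deriv f has_real_derivative deriv (deriv f) x) (at x)"
    if "0 < x" for x
    using f that DERIV_deriv_iff_real_differentiable by blast+
  note min1 = has_real_derivative_min_const[OF \<open>u \<noteq> 1\<close>]
  note mint = has_real_derivative_min_const[OF \<open>u \<noteq> t\<close>]
  have min2: "((\<lambda>u. min (u + 1 - t) 1) has_real_derivative (if u + 1 - t < 1 then 1 else 0)) (at u)"
  proof (rule DERIV_chain2[where f = "\<lambda>v. min v 1" and g = "\<lambda>u. u + 1 - t", THEN DERIV_cong])
    show "((\<lambda>v. min v 1) has_real_derivative (if u + 1 - t < 1 then 1 else 0)) (at (u + 1 - t))"
      using has_real_derivative_min_const[of "u + 1 - t" 1] \<open>u \<noteq> t\<close> by simp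
  qed (auto intro!: derivative_eq_intros)
  have "(phi_kernel_primitive f t has_real_derivative
          ((if u < 1 then 1 else 0) - (if u + 1 - t < 1 then 1 else 0)) * deriv f u
          + deriv (deriv f) u * phi_kernel t u
          - deriv f (min u 1) * (if u < 1 then 1 else 0) + deriv f (min u t) * (if u < t then 1 else 0)) (at u)"
    unfolding phi_kernel_primitive_def[abs_def] phi_kernel_def using assms(2,3)
    by (intro DERIV_add DERIV_diff DERIV_mult min1 min2 df DERIV_chain2[OF df(1) min1]
        DERIV_chain2[OF df(1) mint]) auto
  moreover have "((if u < 1 then 1 else 0) - (if u + 1 - t < 1 then 1 else 0)) * deriv f u
          + deriv (deriv f) u * phi_kernel t u
          - deriv f (min u 1) * (if u < 1 then 1 else 0) + deriv f (min u t) * (if u < t then 1 else 0)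
        = phi_kernel t u * deriv (deriv f) u"
    by (cases "u < 1"; cases "u < t") (simp_all add: min_def)
  ultimately show ?thesis
    by (rule DERIV_cong)
qed

lemma isCont_phi_kernel_primitive:
  assumes f: "\<forall>t>0. f differentiable (at t) \<and> deriv f differentiable (at t)"
    and "0 < u" "0 < t"
  shows "isCont (phi_kernel_primitive f t) u"
proof -
  have "isCont f x" "isCont (deriv f) x" if "0 < x" for x
    using f that by (auto intro: differentiable_imp_continuous_within)
  then show ?thesis
    unfolding phi_kernel_primitive_def[abs_def] phi_kernel_def using assms(2,3)
    by (intro continuous_intros isCont_o2[where f = "\<lambda>u. min u 1"] isCont_o2[where f = "\<lambda>u. min u t"])
      auto
qed

lemma phi_kernel_primitive_at_top:
  assumes "1 \<le> T" "t \<le> T"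
  shows "phi_kernel_primitive f t T = f t - f 1"
  using assms by (simp add: phi_kernel_primitive_def phi_kernel_def min_def)

lemma phi_kernel_primitive_at_bot:
  assumes "\<tau> \<le> 1" "\<tau> \<le> t"
  shows "phi_kernel_primitive f t \<tau> = (t - 1) * deriv f \<tau>"
  using assms by (simp add: phi_kernel_primitive_def phi_kernel_def min_def)

lemma has_real_derivative_phi_kernel_primitive_comp:
  assumes f: "\<forall>t>0. f differentiable (at t) \<and> deriv f differentiable (at t)"
    and \<omega>: "0 < \<omega>" "\<omega> < 1" and "0 < t" "(1 - \<omega>) / \<omega> \<noteq> 1" "(1 - \<omega>) / \<omega> \<noteq> t"
  shows "((\<lambda>\<omega>. phi_kernel_primitive f t ((1 - \<omega>) / \<omega>)) has_real_derivative
           - (phi \<omega> t / \<omega> ^ 3 * deriv (deriv f) ((1 - \<omega>) / \<omega>))) (at \<omega>)"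
proof -
  have "((\<lambda>\<omega>. (1 - \<omega>) / \<omega>) has_real_derivative - 1 / \<omega> ^ 2) (at \<omega>)"
    using \<omega> by (auto intro!: derivative_eq_intros simp: power2_eq_square field_simps)
  from DERIV_chain2[OF has_real_derivative_phi_kernel_primitive[OF f _ assms(4-6)] this]
  show ?thesis
    using \<omega> by (simp add: phi_eq_kernel[OF \<omega>(1)] power3_eq_cube power2_eq_square field_simps)
qed

lemma has_integral_phi_kernel_primitive:
  assumes f: "\<forall>t>0. f differentiable (at t) \<and> deriv f differentiable (at t)"
    and t: "0 < t" and ab: "0 < a" "a \<le> b" "b < 1"
  shows "((\<lambda>\<omega>. phi \<omega> t / \<omega> ^ 3 * deriv (deriv f) ((1 - \<omega>) / \<omega>)) has_integral
           phi_kernel_primitive f t ((1 - a) / a) - phi_kernel_primitive f t ((1 - b) / b)) {a..b}"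
proof -
  define \<Phi> where "\<Phi> \<omega> = - phi_kernel_primitive f t ((1 - \<omega>) / \<omega>)" for \<omega>
  have "((\<lambda>\<omega>. phi \<omega> t / \<omega> ^ 3 * deriv (deriv f) ((1 - \<omega>) / \<omega>)) has_integral \<Phi> b - \<Phi> a) {a..b}"
  proof (rule fundamental_theorem_of_calculus_interior_strong[of "{1 / 2, 1 / (1 + t)}"])
    fix \<omega>
    assume \<omega>: "\<omega> \<in> {a<..<b} - {1 / 2, 1 / (1 + t)}"
    then have "0 < \<omega>" "\<omega> < 1"
      using ab by auto
    moreover have "(1 - \<omega>) / \<omega> \<noteq> 1" "(1 - \<omega>) / \<omega> \<noteq> t"
      using \<omega> \<open>0 < \<omega>\<close> t by (auto simp: field_simps)
    ultimately show "(\<Phi> has_vector_derivative phi \<omega> t / \<omega> ^ 3 * deriv (deriv f) ((1 - \<omega>) / \<omega>)) (at \<omega>)"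
      using has_real_derivative_phi_kernel_primitive_comp[OF f _ _ t] DERIV_minus
      unfolding \<Phi>_def has_real_derivative_iff_has_vector_derivative[symmetric] by fastforce
  next
    have "isCont \<Phi> \<omega>" if "\<omega> \<in> {a..b}" for \<omega>
    proof -
      have "0 < \<omega>" "\<omega> < 1" "0 < (1 - \<omega>) / \<omega>"
        using that ab by auto
      then show ?thesis
        unfolding \<Phi>_def
        by (intro continuous_intros isCont_o2[OF _ isCont_phi_kernel_primitive[OF f _ t]]) auto
    qed
    then show "continuous_on {a..b} \<Phi>"
      by (intro continuous_at_imp_continuous_on) auto
  qed (use ab in auto)
  then show ?thesis
    by (simp add: \<Phi>_def)
qed

lemma phi_integral:
  assumes f: "\<forall>t>0. f differentiable (at t) \<and> deriv f differentiable (at t)"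
    and t: "0 < t" and \<tau>: "0 < \<tau>" "\<tau> \<le> 1" "\<tau> \<le> t"
  shows "((\<lambda>\<omega>. phi \<omega> t / \<omega> ^ 3 * deriv (deriv f) ((1 - \<omega>) / \<omega>))
           has_integral f t - f 1 - (t - 1) * deriv f \<tau>) {0..1 / (1 + \<tau>)}"
proof -
  define T where "T = max 1 t"
  define a where "a = 1 / (1 + T)"
  define b where "b = 1 / (1 + \<tau>)"
  have T: "1 \<le> T" "t \<le> T"
    by (simp_all add: T_def)
  have ab: "0 < a" "a \<le> 1 / 2" "1 / 2 \<le> b" "b < 1" "(1 - a) / a = T" "(1 - b) / b = \<tau>"
    using T \<tau> by (simp_all add: a_def b_def field_simps)
  have "((\<lambda>\<omega>. phi \<omega> t / \<omega> ^ 3 * deriv (deriv f) ((1 - \<omega>) / \<omega>)) has_integral 0) {0..a}"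
  proof (rule has_integral_is_0)
    fix \<omega>
    assume "\<omega> \<in> {0..a}"
    then have "\<omega> * (1 + t) \<le> a * (1 + T)"
      using T t by (intro mult_mono) auto
    also have "\<dots> = 1"
      using T by (simp add: a_def)
    finally have "phi \<omega> t = 0"
      using \<open>\<omega> \<in> {0..a}\<close> ab by (intro phi_eq_0) auto
    then show "phi \<omega> t / \<omega> ^ 3 * deriv (deriv f) ((1 - \<omega>) / \<omega>) = 0"
      by simp
  qed
  moreover note has_integral_phi_kernel_primitive[OF f t ab(1) _ ab(4)]
  ultimately have "((\<lambda>\<omega>. phi \<omega> t / \<omega> ^ 3 * deriv (deriv f) ((1 - \<omega>) / \<omega>)) has_integral
                     0 + (phi_kernel_primitive f t T - phi_kernel_primitive f t \<tau>)) {0..b}"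
    using ab by (intro has_integral_combine) auto
  then show ?thesis
    using T \<tau> by (simp add: b_def phi_kernel_primitive_at_top phi_kernel_primitive_at_bot)
qed

text \<open>Pointwise the integrals of \<open>\<phi>\<^sub>\<omega>\<close> involve \<open>f'(\<tau>)\<close>; these terms cancel in the sum
  because \<open>\<Sum>\<^sub>x (P x n - 1) = 0\<close>, which is also why the integrand vanishes near \<open>\<omega> = 1\<close>.\<close>
theorem fdiv_eq_integral_fdiv_phi:
  fixes P :: "'a \<Rightarrow> real"
  assumes f: "\<forall>t>0. f differentiable (at t) \<and> deriv f differentiable (at t)" and "f 1 = 0"
    and A: "finite A" "A \<noteq> {}" and pos: "\<forall>x\<in>A. 0 < P x" and sum: "sum P A = 1"
  shows "((\<lambda>\<omega>. fdiv_unif (phi \<omega>) A P / \<omega> ^ 3 * deriv (deriv f) ((1 - \<omega>) / \<omega>))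
           has_integral fdiv_unif f A P) {0..1}"
proof -
  define n where "n = real (card A)"
  define t where "t x = P x * n" for x
  define \<tau> where "\<tau> = min 1 (Min (t ` A))"
  define b where "b = 1 / (1 + \<tau>)"
  define I where "I \<omega> = fdiv_unif (phi \<omega>) A P / \<omega> ^ 3 * deriv (deriv f) ((1 - \<omega>) / \<omega>)" for \<omega>
  have n: "0 < n"
    using A by (simp add: n_def card_gt_0_iff)
  have t: "\<And>x. x \<in> A \<Longrightarrow> 0 < t x"
    using pos n by (simp add: t_def)
  have \<tau>: "0 < \<tau>" "\<tau> \<le> 1" "\<And>x. x \<in> A \<Longrightarrow> \<tau> \<le> t x"
    using A t by (simp_all add: \<tau>_def min.coboundedI2)
  have b: "0 < b" "1 / 2 \<le> b" "b \<le> 1" "b * (1 + \<tau>) = 1"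
    using \<tau> by (simp_all add: b_def field_simps)
  have sum_t: "(\<Sum>x\<in>A. t x - 1) = 0"
    using sum n by (simp add: t_def sum_subtractf n_def flip: sum_distrib_right)
  have I_eq: "I \<omega> = (\<Sum>x\<in>A. 1 / n * (phi \<omega> (t x) / \<omega> ^ 3 * deriv (deriv f) ((1 - \<omega>) / \<omega>)))" for \<omega>
    by (simp add: I_def fdiv_unif_def t_def n_def sum_distrib_right sum_divide_distrib)
  have "(I has_integral (\<Sum>x\<in>A. 1 / n * (f (t x) - f 1 - (t x - 1) * deriv f \<tau>))) {0..b}"
    unfolding I_eq b_def using \<tau> t
    by (intro has_integral_sum has_integral_mult_right phi_integral[OF f] A) auto
  also have "(\<Sum>x\<in>A. 1 / n * (f (t x) - f 1 - (t x - 1) * deriv f \<tau>))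
               = (\<Sum>x\<in>A. 1 / n * f (t x) - (t x - 1) * (deriv f \<tau> / n))"
    using \<open>f 1 = 0\<close> n by (intro sum.cong) (auto simp: field_simps)
  also have "\<dots> = (\<Sum>x\<in>A. 1 / n * f (t x)) - (\<Sum>x\<in>A. t x - 1) * (deriv f \<tau> / n)"
    by (simp only: sum_subtractf[of "\<lambda>x. 1 / n * f (t x)"] sum_distrib_right)
  also have "\<dots> = fdiv_unif f A P"
    unfolding sum_t by (simp add: fdiv_unif_def t_def n_def)
  finally have "(I has_integral fdiv_unif f A P) {0..b}" .
  moreover have "(I has_integral 0) {b..1}"
  proof (rule has_integral_is_0)
    fix \<omega>
    assume \<omega>: "\<omega> \<in> {b..1}"
    have "phi \<omega> (t x) = \<omega> * t x - \<omega>" if "x \<in> A" for x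
    proof (rule phi_eq_affine)
      have "b * (1 + \<tau>) \<le> \<omega> * (1 + t x)"
        using \<omega> \<tau> that b by (intro mult_mono) auto
      then show "1 \<le> \<omega> * (1 + t x)"
        using b by simp
      show "1 - \<omega> \<le> \<omega>"
        using \<omega> b by auto
    qed
    then have "fdiv_unif (phi \<omega>) A P = (\<Sum>x\<in>A. \<omega> / n * (t x - 1))"
      unfolding fdiv_unif_def n_def[symmetric] t_def[symmetric] by (intro sum.cong) (auto simp: field_simps)
    then have "fdiv_unif (phi \<omega>) A P = \<omega> / n * (\<Sum>x\<in>A. t x - 1)"
      by (simp add: sum_distrib_left)
    then show "I \<omega> = 0"
      by (simp add: I_def sum_t)
  qed
  ultimately have "(I has_integral fdiv_unif f A P + 0) {0..1}"
    using b by (intro has_integral_combine) auto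
  then show ?thesis
    unfolding I_def by simp
qed

theorem theorem14:
  fixes D n :: nat and p :: "nat \<Rightarrow> real" and L :: "nat list set" and \<rho> :: real
  assumes D2: "D \<ge> 2"
    and ppos: "\<forall>i<D. p i > 0"
    and psum: "(\<Sum>i<D. p i) = 1"
    and tun: "L \<in> tunstall_trees D p"
    and nL: "card L = n"
    and rho: "\<rho> = 1 / Min (p ` {..<D})"
  shows "(\<forall>\<omega>\<in>{0<..<1}.
            (\<forall>L'\<in>parsing_trees D. card L' = n \<longrightarrow>
                fdiv_unif (phi \<omega>) L (word_prob p) \<le> fdiv_unif (phi \<omega>) L' (word_prob p))
          \<and> fdiv_unif (phi \<omega>) L (word_prob p) \<le> bound_b \<omega> \<rho> n
          \<and> fdiv_unif (phi \<omega>) L (word_prob p) \<le> bound_c \<omega> \<rho>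
          \<and> (\<lambda>m. bound_b \<omega> \<rho> m) \<longlonglongrightarrow> bound_c \<omega> \<rho>)
       \<and> (\<forall>f :: real \<Rightarrow> real.
            convex_on {0<..} f
            \<and> (\<forall>t>0. f differentiable (at t) \<and> deriv f differentiable (at t))
            \<and> (\<exists>l. (f \<longlongrightarrow> l) (at_right 0))
            \<and> f 1 = 0
            \<longrightarrow> ((\<lambda>\<omega>. fdiv_unif (phi \<omega>) L (word_prob p) / \<omega> ^ 3
                       * deriv (deriv f) ((1 - \<omega>) / \<omega>))
                  has_integral fdiv_unif f L (word_prob p)) {0..1})"
proof -
  interpret memoryless_source D p
    using D2 ppos psum by unfold_locales
  have \<rho>: "1 < \<rho>"
    using rho p_min_pos p_min_less_1 by (simp add: p_min_def)
  have L: "L \<in> parsing_trees D"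
    using tun by (rule tunstall_trees_parsing_trees)
  have fin: "finite L" and nonempty: "L \<noteq> {}" and sum: "sum P L = 1"
    and pos: "\<forall>x\<in>L. 0 < P x"
    using parsing_trees_finite[OF L] parsing_trees_card[OF _ L] parsing_trees_sum_word_prob[OF L]
      word_prob_bounds[OF parsing_trees_words[OF L]] D2 by auto
  have Min_pos: "0 < Min (P ` L)"
    using fin nonempty pos by simp
  have bounds: "\<forall>x\<in>L. Min (P ` L) \<le> P x \<and> P x \<le> \<rho> * Min (P ` L)"
    using tunstall_leaf_ratio[OF tun] fin rho by (simp add: p_min_def)
  show ?thesis
  proof (intro conjI ballI allI impI)
    fix \<omega> :: real and L'
    assume "\<omega> \<in> {0<..<1}" "L' \<in> parsing_trees D" "card L' = n"
    then show "fdiv_unif (phi \<omega>) L P \<le> fdiv_unif (phi \<omega>) L' P"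
      using tunstall_minimizes_fdiv_phi[OF tun] nL by simp
  next
    fix \<omega> :: real
    show "fdiv_unif (phi \<omega>) L P \<le> bound_b \<omega> \<rho> n"
      using fdiv_phi_le_bound_b[OF fin nonempty \<rho> Min_pos _ sum] bounds nL by simp
  next
    fix \<omega> :: real
    show "fdiv_unif (phi \<omega>) L P \<le> bound_c \<omega> \<rho>"
      using fdiv_phi_le_bound_c[OF fin nonempty Min_pos \<rho> bounds sum] .
  next
    fix \<omega> :: real
    show "(\<lambda>m. bound_b \<omega> \<rho> m) \<longlonglongrightarrow> bound_c \<omega> \<rho>"
      using bound_b_tendsto_bound_c[OF \<rho>] .
  qed (use fdiv_eq_integral_fdiv_phi[OF _ _ fin nonempty pos sum] in blast)
qed

end
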